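(* For every epimorphism $E$ in $\mathbf{Lens}$, the get functor $UE$ is an effective epimorphism in $\mathbf{Cat}$ (i.e. $UE$ is a coequaliser of its kernel pair in $\mathbf{Cat}$).
   Context: $\mathbf{Cat}$ is the category of small categories and functors. A lens $F\colon \mathbf{A}\to\mathbf{B}$ between small categories consists of a functor $F\colon\mathbf{A}\to\mathbf{B}$ (the get functor) together with, for each object $A$ of $\mathbf{A}$, a function $\varphi_{F,A}$ from the set of morphisms of $\mathbf{B}$ with domain $FA$ to the set of morphisms of $\mathbf{A}$ with domain $A$, such that: $F(\varphi_{F,A}b)=b$; $\varphi_{F,A}(\mathrm{id}_{FA})=\mathrm{id}_A$; and $\varphi_{F,A}(b'\circ b)=\varphi_{F,A'}(b')\circ\varphi_{F,A}(b)$ whenever $b$ has domain $FA$, $A'$ is the codomain of $\varphi_{F,A}b$, and $b'$ has domain $FA'$. $\mathbf{Lens}$ is the category of small categories and lenses, with composite of $F\colon\mathbf{A}\to\mathbf{B}$, $G\colon\mathbf{B}\to\mathbf{C}$ having get functor $G\circ F$ and puts $\varphi_{G\circ F,A}(c)=\varphi_{F,A}(\varphi_{G,FA}(c))$. $U\colon\mathbf{Lens}\to\mathbf{Cat}$ sends a lens to its get functor. *)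

theory Defs
  imports Main
begin

text \<open>A small category with objects of type 'o and morphisms of type 'm.
  cComp g f denotes the composite "g after f".\<close>

record ('o, 'm) cat =
  Obj  :: "'o set"
  Arr  :: "'m set"
  Dom  :: "'m \<Rightarrow> 'o"
  Cod  :: "'m \<Rightarrow> 'o"
  Idt  :: "'o \<Rightarrow> 'm"
  Comp :: "'m \<Rightarrow> 'm \<Rightarrow> 'm"

definition is_cat :: "('o, 'm) cat \<Rightarrow> bool" where
  "is_cat C \<longleftrightarrow>
     (\<forall>f\<in>Arr C. Dom C f \<in> Obj C \<and> Cod C f \<in> Obj C) \<and>
     (\<forall>x\<in>Obj C. Idt C x \<in> Arr C \<and> Dom C (Idt C x) = x \<and> Cod C (Idt C x) = x) \<and>
     (\<forall>f\<in>Arr C. \<forall>g\<in>Arr C. Cod C f = Dom C g \<longrightarrow>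
        Comp C g f \<in> Arr C \<and> Dom C (Comp C g f) = Dom C f \<and> Cod C (Comp C g f) = Cod C g) \<and>
     (\<forall>f\<in>Arr C. Comp C f (Idt C (Dom C f)) = f \<and> Comp C (Idt C (Cod C f)) f = f) \<and>
     (\<forall>f\<in>Arr C. \<forall>g\<in>Arr C. \<forall>h\<in>Arr C. Cod C f = Dom C g \<longrightarrow> Cod C g = Dom C h \<longrightarrow>
        Comp C h (Comp C g f) = Comp C (Comp C h g) f)"

record ('ao, 'am, 'bo, 'bm) ftor =
  FO :: "'ao \<Rightarrow> 'bo"
  FM :: "'am \<Rightarrow> 'bm"

definition is_functor ::
  "('ao, 'am) cat \<Rightarrow> ('bo, 'bm) cat \<Rightarrow> ('ao, 'am, 'bo, 'bm) ftor \<Rightarrow> bool" where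
  "is_functor A B F \<longleftrightarrow>
     (\<forall>x\<in>Obj A. FO F x \<in> Obj B) \<and>
     (\<forall>f\<in>Arr A. FM F f \<in> Arr B \<and> Dom B (FM F f) = FO F (Dom A f) \<and> Cod B (FM F f) = FO F (Cod A f)) \<and>
     (\<forall>x\<in>Obj A. FM F (Idt A x) = Idt B (FO F x)) \<and>
     (\<forall>f\<in>Arr A. \<forall>g\<in>Arr A. Cod A f = Dom A g \<longrightarrow> FM F (Comp A g f) = Comp B (FM F g) (FM F f))"

definition functor_comp ::
  "('bo, 'bm, 'co, 'cm) ftor \<Rightarrow> ('ao, 'am, 'bo, 'bm) ftor \<Rightarrow> ('ao, 'am, 'co, 'cm) ftor" where
  "functor_comp G F = \<lparr>FO = FO G \<circ> FO F, FM = FM G \<circ> FM F\<rparr>"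

text \<open>Equality of functors with domain A (functions are only relevant on the carriers).\<close>
definition functor_eq :: "('ao, 'am) cat \<Rightarrow> ('ao, 'am, 'bo, 'bm) ftor \<Rightarrow> ('ao, 'am, 'bo, 'bm) ftor \<Rightarrow> bool" where
  "functor_eq A F G \<longleftrightarrow> (\<forall>x\<in>Obj A. FO F x = FO G x) \<and> (\<forall>f\<in>Arr A. FM F f = FM G f)"

record ('ao, 'am, 'bo, 'bm) lens =
  Get :: "('ao, 'am, 'bo, 'bm) ftor"
  Put :: "'ao \<Rightarrow> 'bm \<Rightarrow> 'am"

definition is_lens ::
  "('ao, 'am) cat \<Rightarrow> ('bo, 'bm) cat \<Rightarrow> ('ao, 'am, 'bo, 'bm) lens \<Rightarrow> bool" where
  "is_lens A B L \<longleftrightarrow>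
     is_functor A B (Get L) \<and>
     (\<forall>x\<in>Obj A. \<forall>b\<in>Arr B. Dom B b = FO (Get L) x \<longrightarrow>
        Put L x b \<in> Arr A \<and> Dom A (Put L x b) = x \<and> FM (Get L) (Put L x b) = b) \<and>
     (\<forall>x\<in>Obj A. Put L x (Idt B (FO (Get L) x)) = Idt A x) \<and>
     (\<forall>x\<in>Obj A. \<forall>b\<in>Arr B. \<forall>b'\<in>Arr B. Dom B b = FO (Get L) x \<longrightarrow>
        Dom B b' = FO (Get L) (Cod A (Put L x b)) \<longrightarrow>
        Put L x (Comp B b' b) = Comp A (Put L (Cod A (Put L x b)) b') (Put L x b))"

definition lens_comp ::
  "('bo, 'bm, 'co, 'cm) lens \<Rightarrow> ('ao, 'am, 'bo, 'bm) lens \<Rightarrow> ('ao, 'am, 'co, 'cm) lens" where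
  "lens_comp G F = \<lparr>Get = functor_comp (Get G) (Get F),
                     Put = (\<lambda>x c. Put F x (Put G (FO (Get F) x) c))\<rparr>"

definition lens_eq ::
  "('ao, 'am) cat \<Rightarrow> ('bo, 'bm) cat \<Rightarrow> ('ao, 'am, 'bo, 'bm) lens \<Rightarrow> ('ao, 'am, 'bo, 'bm) lens \<Rightarrow> bool" where
  "lens_eq A B L M \<longleftrightarrow> functor_eq A (Get L) (Get M) \<and>
     (\<forall>x\<in>Obj A. \<forall>b\<in>Arr B. Dom B b = FO (Get L) x \<longrightarrow> Put L x b = Put M x b)"

text \<open>Epimorphism in Lens. Test categories range over small categories whose objects and
  morphisms lie in the (large) universe type ('bo + 'bm + nat) set.\<close>
type_synonym ('bo, 'bm) test_univ = "('bo + 'bm + nat) set"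

definition lens_epi ::
  "('ao, 'am) cat \<Rightarrow> ('bo, 'bm) cat \<Rightarrow> ('ao, 'am, 'bo, 'bm) lens \<Rightarrow> bool" where
  "lens_epi A B E \<longleftrightarrow> is_lens A B E \<and>
     (\<forall>(C :: (('bo, 'bm) test_univ, ('bo, 'bm) test_univ) cat) G H.
        is_cat C \<longrightarrow> is_lens B C G \<longrightarrow> is_lens B C H \<longrightarrow>
        lens_eq A C (lens_comp G E) (lens_comp H E) \<longrightarrow> lens_eq B C G H)"

definition kernel_pair ::
  "('ao, 'am) cat \<Rightarrow> ('ao, 'am, 'bo, 'bm) ftor \<Rightarrow> ('ao \<times> 'ao, 'am \<times> 'am) cat" where
  "kernel_pair A F = \<lparr>
     Obj = {(x, y). x \<in> Obj A \<and> y \<in> Obj A \<and> FO F x = FO F y},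
     Arr = {(f, g). f \<in> Arr A \<and> g \<in> Arr A \<and> FM F f = FM F g},
     Dom = (\<lambda>(f, g). (Dom A f, Dom A g)),
     Cod = (\<lambda>(f, g). (Cod A f, Cod A g)),
     Idt = (\<lambda>(x, y). (Idt A x, Idt A y)),
     Comp = (\<lambda>(f', g') (f, g). (Comp A f' f, Comp A g' g))\<rparr>"

definition kp_proj1 :: "('ao \<times> 'ao, 'am \<times> 'am, 'ao, 'am) ftor" where
  "kp_proj1 = \<lparr>FO = fst, FM = fst\<rparr>"

definition kp_proj2 :: "('ao \<times> 'ao, 'am \<times> 'am, 'ao, 'am) ftor" where
  "kp_proj2 = \<lparr>FO = snd, FM = snd\<rparr>"

definition is_coequaliser ::
  "('ko, 'km) cat \<Rightarrow> ('ao, 'am) cat \<Rightarrow> ('bo, 'bm) cat \<Rightarrow>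
   ('ko, 'km, 'ao, 'am) ftor \<Rightarrow> ('ko, 'km, 'ao, 'am) ftor \<Rightarrow>
   ('ao, 'am, 'bo, 'bm) ftor \<Rightarrow> ('do, 'dm) cat \<Rightarrow> bool" where
  "is_coequaliser K A B P Q F D \<longleftrightarrow>
     is_functor A B F \<and>
     functor_eq K (functor_comp F P) (functor_comp F Q) \<and>
     (\<forall>H :: ('ao, 'am, 'do, 'dm) ftor.
        is_cat D \<longrightarrow> is_functor A D H \<longrightarrow> functor_eq K (functor_comp H P) (functor_comp H Q) \<longrightarrow>
        (\<exists>H'. is_functor B D H' \<and> functor_eq A (functor_comp H' F) H \<and>
           (\<forall>H''. is_functor B D H'' \<longrightarrow> functor_eq A (functor_comp H'' F) H \<longrightarrow>
                  functor_eq B H' H'')))"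

end

(* A lens epimorphism E : A -> B is surjective on objects. Its image I is closed under codomains
   (an arrow out of E x lifts by Put at x), so one may test E against the category obtained from B
   by adding a second copy of the objects outside I. The lens including B as the upper copy and the
   lens sending the objects outside I to the lower copy agree after E, hence agree, forcing I = Obj B.
   Surjectivity on objects and the puts then lift every composable pair of B to a composable pair
   of A, and a functor with this lifting property is the coequaliser of its kernel pair: a functor
   constant on the fibres descends along it by choosing lifts, functoriality of the descended
   functor on composites coming from the lifted composable pairs. *)

theory Submission
  imports Defs
begin

lemma is_catD:
  assumes "is_cat C"
  shows cat_Dom_in_Obj: "f \<in> Arr C \<Longrightarrow> Dom C f \<in> Obj C"
    and cat_Cod_in_Obj: "f \<in> Arr C \<Longrightarrow> Cod C f \<in> Obj C"
    and cat_Idt_in_Arr: "x \<in> Obj C \<Longrightarrow> Idt C x \<in> Arr C"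
    and cat_Dom_Idt: "x \<in> Obj C \<Longrightarrow> Dom C (Idt C x) = x"
    and cat_Cod_Idt: "x \<in> Obj C \<Longrightarrow> Cod C (Idt C x) = x"
    and cat_Comp_in_Arr:
      "f \<in> Arr C \<Longrightarrow> g \<in> Arr C \<Longrightarrow> Cod C f = Dom C g \<Longrightarrow> Comp C g f \<in> Arr C"
    and cat_Dom_Comp:
      "f \<in> Arr C \<Longrightarrow> g \<in> Arr C \<Longrightarrow> Cod C f = Dom C g \<Longrightarrow> Dom C (Comp C g f) = Dom C f"
    and cat_Cod_Comp:
      "f \<in> Arr C \<Longrightarrow> g \<in> Arr C \<Longrightarrow> Cod C f = Dom C g \<Longrightarrow> Cod C (Comp C g f) = Cod C g"
    and cat_Comp_Idt_Dom: "f \<in> Arr C \<Longrightarrow> Comp C f (Idt C (Dom C f)) = f"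
    and cat_Comp_Idt_Cod: "f \<in> Arr C \<Longrightarrow> Comp C (Idt C (Cod C f)) f = f"
    and cat_Comp_assoc:
      "f \<in> Arr C \<Longrightarrow> g \<in> Arr C \<Longrightarrow> h \<in> Arr C \<Longrightarrow> Cod C f = Dom C g \<Longrightarrow> Cod C g = Dom C h \<Longrightarrow>
       Comp C h (Comp C g f) = Comp C (Comp C h g) f"
  using assms unfolding is_cat_def by auto

lemma is_functorD:
  assumes "is_functor A B F"
  shows functor_FO_in_Obj: "x \<in> Obj A \<Longrightarrow> FO F x \<in> Obj B"
    and functor_FM_in_Arr: "f \<in> Arr A \<Longrightarrow> FM F f \<in> Arr B"
    and functor_Dom_FM: "f \<in> Arr A \<Longrightarrow> Dom B (FM F f) = FO F (Dom A f)"
    and functor_Cod_FM: "f \<in> Arr A \<Longrightarrow> Cod B (FM F f) = FO F (Cod A f)"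
    and functor_FM_Idt: "x \<in> Obj A \<Longrightarrow> FM F (Idt A x) = Idt B (FO F x)"
    and functor_FM_Comp:
      "f \<in> Arr A \<Longrightarrow> g \<in> Arr A \<Longrightarrow> Cod A f = Dom A g \<Longrightarrow> FM F (Comp A g f) = Comp B (FM F g) (FM F f)"
  using assms unfolding is_functor_def by auto

lemma is_lensD:
  assumes "is_lens A B L"
  shows lens_is_functor: "is_functor A B (Get L)"
    and lens_Put_in_Arr: "x \<in> Obj A \<Longrightarrow> b \<in> Arr B \<Longrightarrow> Dom B b = FO (Get L) x \<Longrightarrow> Put L x b \<in> Arr A"
    and lens_Dom_Put: "x \<in> Obj A \<Longrightarrow> b \<in> Arr B \<Longrightarrow> Dom B b = FO (Get L) x \<Longrightarrow> Dom A (Put L x b) = x"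
    and lens_Get_Put:
      "x \<in> Obj A \<Longrightarrow> b \<in> Arr B \<Longrightarrow> Dom B b = FO (Get L) x \<Longrightarrow> FM (Get L) (Put L x b) = b"
  using assms unfolding is_lens_def by auto

section \<open>Functors lifting composable pairs are effective epimorphisms\<close>

definition lifts_composable_pairs ::
  "('ao, 'am) cat \<Rightarrow> ('bo, 'bm) cat \<Rightarrow> ('ao, 'am, 'bo, 'bm) ftor \<Rightarrow> bool" where
  "lifts_composable_pairs A B F \<longleftrightarrow>
     (\<forall>g\<in>Arr B. \<forall>g'\<in>Arr B. Cod B g = Dom B g' \<longrightarrow>
        (\<exists>f\<in>Arr A. \<exists>f'\<in>Arr A. Cod A f = Dom A f' \<and> FM F f = g \<and> FM F f' = g'))"

lemma lifts_composable_pairsD: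
  assumes "lifts_composable_pairs A B F" "g \<in> Arr B" "g' \<in> Arr B" "Cod B g = Dom B g'"
  obtains f f' where "f \<in> Arr A" "f' \<in> Arr A" "Cod A f = Dom A f'" "FM F f = g" "FM F f' = g'"
  using assms unfolding lifts_composable_pairs_def by blast

lemma lifts_composable_pairs_surj_Arr:
  assumes B: "is_cat B" and F: "lifts_composable_pairs A B F"
  shows "Arr B \<subseteq> FM F ` Arr A"
proof
  fix g assume g: "g \<in> Arr B"
  have "Idt B (Cod B g) \<in> Arr B" "Cod B g = Dom B (Idt B (Cod B g))"
    using g by (simp_all add: is_catD[OF B])
  with g show "g \<in> FM F ` Arr A"
    by (metis F lifts_composable_pairsD image_eqI)
qed

lemma lifts_composable_pairs_surj_Obj:
  assumes A: "is_cat A" and B: "is_cat B"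
    and F: "is_functor A B F" "lifts_composable_pairs A B F"
  shows "Obj B \<subseteq> FO F ` Obj A"
proof
  fix b assume b: "b \<in> Obj B"
  then have "Idt B b \<in> FM F ` Arr A"
    using lifts_composable_pairs_surj_Arr[OF B F(2)] cat_Idt_in_Arr[OF B] by blast
  then obtain f where f: "f \<in> Arr A" "Idt B b = FM F f"
    by (rule imageE)
  have "FO F (Dom A f) = Dom B (FM F f)"
    using f(1) by (simp add: functor_Dom_FM[OF F(1)])
  also have "\<dots> = b"
    using b f(2)[symmetric] by (simp add: cat_Dom_Idt[OF B])
  finally show "b \<in> FO F ` Obj A"
    using f(1) cat_Dom_in_Obj[OF A] by (metis image_eqI)
qed

definition constant_on_fibres ::
  "('ao, 'am) cat \<Rightarrow> ('ao, 'am, 'bo, 'bm) ftor \<Rightarrow> ('ao, 'am, 'do, 'dm) ftor \<Rightarrow> bool" where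
  "constant_on_fibres A F H \<longleftrightarrow>
     (\<forall>x\<in>Obj A. \<forall>y\<in>Obj A. FO F x = FO F y \<longrightarrow> FO H x = FO H y) \<and>
     (\<forall>f\<in>Arr A. \<forall>g\<in>Arr A. FM F f = FM F g \<longrightarrow> FM H f = FM H g)"

lemma functor_eq_kernel_pair_iff:
  "functor_eq (kernel_pair A F) (functor_comp H kp_proj1) (functor_comp H kp_proj2) \<longleftrightarrow>
   constant_on_fibres A F H"
  unfolding functor_eq_def constant_on_fibres_def kernel_pair_def functor_comp_def
    kp_proj1_def kp_proj2_def
  by auto

definition induced_functor ::
  "('ao, 'am) cat \<Rightarrow> ('ao, 'am, 'bo, 'bm) ftor \<Rightarrow> ('ao, 'am, 'do, 'dm) ftor \<Rightarrow>
   ('bo, 'bm, 'do, 'dm) ftor" where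
  "induced_functor A F H =
     \<lparr>FO = (\<lambda>b. FO H (SOME a. a \<in> Obj A \<and> FO F a = b)),
      FM = (\<lambda>g. FM H (SOME f. f \<in> Arr A \<and> FM F f = g))\<rparr>"

lemma
  assumes fib: "constant_on_fibres A F H"
  shows FO_induced_functor: "x \<in> Obj A \<Longrightarrow> FO (induced_functor A F H) (FO F x) = FO H x"
    and FM_induced_functor: "f \<in> Arr A \<Longrightarrow> FM (induced_functor A F H) (FM F f) = FM H f"
proof -
  show "FO (induced_functor A F H) (FO F x) = FO H x" if x: "x \<in> Obj A"
  proof -
    let ?y = "SOME y. y \<in> Obj A \<and> FO F y = FO F x"
    have "?y \<in> Obj A \<and> FO F ?y = FO F x"
      by (rule someI[where x = x]) (simp add: x)
    then have "FO H ?y = FO H x"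
      using x fib unfolding constant_on_fibres_def by blast
    then show ?thesis
      unfolding induced_functor_def by simp
  qed
  show "FM (induced_functor A F H) (FM F f) = FM H f" if f: "f \<in> Arr A"
  proof -
    let ?g = "SOME g. g \<in> Arr A \<and> FM F g = FM F f"
    have "?g \<in> Arr A \<and> FM F ?g = FM F f"
      by (rule someI[where x = f]) (simp add: f)
    then have "FM H ?g = FM H f"
      using f fib unfolding constant_on_fibres_def by blast
    then show ?thesis
      unfolding induced_functor_def by simp
  qed
qed

lemma functor_eq_induced_functor_comp:
  assumes "constant_on_fibres A F H"
  shows "functor_eq A (functor_comp (induced_functor A F H) F) H"
  using FO_induced_functor[OF assms] FM_induced_functor[OF assms]
  unfolding functor_eq_def functor_comp_def by simp

lemma is_functor_induced_functor:
  assumes A: "is_cat A" and B: "is_cat B" and F: "is_functor A B F"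
    and lift: "lifts_composable_pairs A B F"
    and H: "is_functor A D H" and fib: "constant_on_fibres A F H"
  shows "is_functor B D (induced_functor A F H)" (is "is_functor B D ?H")
  unfolding is_functor_def
proof (intro conjI ballI impI)
  fix b assume "b \<in> Obj B"
  then obtain x where x: "x \<in> Obj A" "b = FO F x"
    using lifts_composable_pairs_surj_Obj[OF A B F lift] by blast
  then show "FO ?H b \<in> Obj D"
    by (simp add: FO_induced_functor[OF fib] functor_FO_in_Obj[OF H])
  have "FM ?H (Idt B b) = FM ?H (FM F (Idt A x))"
    using x by (simp add: functor_FM_Idt[OF F])
  also have "\<dots> = Idt D (FO H x)"
    using x by (simp add: FM_induced_functor[OF fib] cat_Idt_in_Arr[OF A] functor_FM_Idt[OF H])
  finally show "FM ?H (Idt B b) = Idt D (FO ?H b)"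
    using x by (simp add: FO_induced_functor[OF fib])
next
  fix g assume "g \<in> Arr B"
  then obtain f where f: "f \<in> Arr A" "g = FM F f"
    using lifts_composable_pairs_surj_Arr[OF B lift] by blast
  then show "FM ?H g \<in> Arr D" "Dom D (FM ?H g) = FO ?H (Dom B g)"
    "Cod D (FM ?H g) = FO ?H (Cod B g)"
    using cat_Dom_in_Obj[OF A] cat_Cod_in_Obj[OF A]
    by (simp_all add: FM_induced_functor[OF fib] FO_induced_functor[OF fib]
        is_functorD[OF H] functor_Dom_FM[OF F] functor_Cod_FM[OF F])
next
  fix g g' assume "g \<in> Arr B" "g' \<in> Arr B" "Cod B g = Dom B g'"
  then obtain f f' where f: "f \<in> Arr A" "f' \<in> Arr A" "Cod A f = Dom A f'"
    and g: "g = FM F f" "g' = FM F f'"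
    using lift by (metis lifts_composable_pairsD)
  have "FM ?H (Comp B g' g) = FM ?H (FM F (Comp A f' f))"
    using f g by (simp add: functor_FM_Comp[OF F])
  also have "\<dots> = FM H (Comp A f' f)"
    using f by (simp add: FM_induced_functor[OF fib] cat_Comp_in_Arr[OF A])
  also have "\<dots> = Comp D (FM ?H g') (FM ?H g)"
    using f g by (simp add: functor_FM_Comp[OF H] FM_induced_functor[OF fib])
  finally show "FM ?H (Comp B g' g) = Comp D (FM ?H g') (FM ?H g)" .
qed

lemma functor_eq_cancel_surj:
  assumes surj: "Obj B \<subseteq> FO F ` Obj A" "Arr B \<subseteq> FM F ` Arr A"
    and G: "functor_eq A (functor_comp G F) H" and G': "functor_eq A (functor_comp G' F) H"
  shows "functor_eq B G G'"
  unfolding functor_eq_def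
proof (intro conjI ballI)
  fix b assume "b \<in> Obj B"
  with surj(1) obtain x where "x \<in> Obj A" "b = FO F x" by blast
  with G G' show "FO G b = FO G' b"
    unfolding functor_eq_def functor_comp_def by simp
next
  fix g assume "g \<in> Arr B"
  with surj(2) obtain f where "f \<in> Arr A" "g = FM F f" by blast
  with G G' show "FM G g = FM G' g"
    unfolding functor_eq_def functor_comp_def by simp
qed

lemma coequaliser_kernel_pairI:
  assumes A: "is_cat A" and B: "is_cat B" and F: "is_functor A B F"
    and lift: "lifts_composable_pairs A B F"
  shows "is_coequaliser (kernel_pair A F) A B kp_proj1 kp_proj2 F D"
  unfolding is_coequaliser_def functor_eq_kernel_pair_iff
proof (intro conjI allI impI F)
  show "constant_on_fibres A F F"
    unfolding constant_on_fibres_def by simp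
  fix H assume "is_cat D" and H: "is_functor A D H" "constant_on_fibres A F H"
  then show "\<exists>H'. is_functor B D H' \<and> functor_eq A (functor_comp H' F) H \<and>
           (\<forall>H''. is_functor B D H'' \<longrightarrow> functor_eq A (functor_comp H'' F) H \<longrightarrow> functor_eq B H' H'')"
  proof (intro exI conjI allI impI)
    show "is_functor B D (induced_functor A F H)"
      using A B F lift H by (rule is_functor_induced_functor)
    show "functor_eq A (functor_comp (induced_functor A F H) F) H"
      using H(2) by (rule functor_eq_induced_functor_comp)
    show "functor_eq B (induced_functor A F H) H''"
      if "functor_eq A (functor_comp H'' F) H" for H''
      using lifts_composable_pairs_surj_Obj[OF A B F lift] lifts_composable_pairs_surj_Arr[OF B lift]
        functor_eq_induced_functor_comp[OF H(2)] that
      by (rule functor_eq_cancel_surj)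
  qed
qed

section \<open>Epimorphisms of lenses are surjective on objects\<close>

definition is_cosieve :: "('o, 'm) cat \<Rightarrow> 'o set \<Rightarrow> bool" where
  "is_cosieve C I \<longleftrightarrow> I \<subseteq> Obj C \<and> (\<forall>g\<in>Arr C. Dom C g \<in> I \<longrightarrow> Cod C g \<in> I)"

lemma lens_image_is_cosieve:
  assumes A: "is_cat A" and L: "is_lens A B E"
  shows "is_cosieve B (FO (Get E) ` Obj A)"
  unfolding is_cosieve_def
proof (intro conjI ballI impI)
  show "FO (Get E) ` Obj A \<subseteq> Obj B"
    using functor_FO_in_Obj[OF lens_is_functor[OF L]] by blast
  fix g assume g: "g \<in> Arr B" and "Dom B g \<in> FO (Get E) ` Obj A"
  then obtain x where x: "x \<in> Obj A" "Dom B g = FO (Get E) x" by blast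
  have "Put E x g \<in> Arr A" "FM (Get E) (Put E x g) = g"
    using x g by (simp_all add: lens_Put_in_Arr[OF L] lens_Get_Put[OF L])
  then have "Cod B g = FO (Get E) (Cod A (Put E x g))"
    by (metis functor_Cod_FM[OF lens_is_functor[OF L]])
  then show "Cod B g \<in> FO (Get E) ` Obj A"
    using cat_Cod_in_Obj[OF A \<open>Put E x g \<in> Arr A\<close>] by blast
qed

text \<open>Objects and arrows of B, in an upper and a lower copy, coded as elements of the test
  universe of lens_epi; the marker Inr (Inr 0) tags the lower copy.\<close>

definition tagged_obj :: "'bo \<Rightarrow> bool \<Rightarrow> ('bo, 'bm) test_univ" where
  "tagged_obj b upper = (if upper then {Inl b} else {Inl b, Inr (Inr 0)})"

definition tagged_arr :: "'bm \<Rightarrow> bool \<Rightarrow> ('bo, 'bm) test_univ" where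
  "tagged_arr g upper = (if upper then {Inr (Inl g)} else {Inr (Inl g), Inr (Inr 0)})"

definition untag_obj :: "('bo, 'bm) test_univ \<Rightarrow> 'bo" where
  "untag_obj s = (THE b. Inl b \<in> s)"

definition untag_arr :: "('bo, 'bm) test_univ \<Rightarrow> 'bm" where
  "untag_arr s = (THE g. Inr (Inl g) \<in> s)"

definition is_upper :: "('bo, 'bm) test_univ \<Rightarrow> bool" where
  "is_upper s \<longleftrightarrow> Inr (Inr 0) \<notin> s"

lemma untag_tagged [simp]:
  "untag_obj (tagged_obj b upper) = b" "untag_arr (tagged_arr g upper) = g"
  "is_upper (tagged_obj b upper) = upper" "is_upper (tagged_arr g upper) = upper"
  unfolding untag_obj_def untag_arr_def is_upper_def tagged_obj_def tagged_arr_def by simp_all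

lemma tagged_obj_inject [simp]:
  "tagged_obj b upper = tagged_obj b' upper' \<longleftrightarrow> b = b' \<and> upper = upper'"
proof
  assume eq: "tagged_obj b upper = tagged_obj b' upper'"
  show "b = b' \<and> upper = upper'"
    using arg_cong[OF eq, of untag_obj] arg_cong[OF eq, of is_upper] by simp
qed simp

lemma tagged_arr_inject [simp]:
  "tagged_arr g upper = tagged_arr g' upper' \<longleftrightarrow> g = g' \<and> upper = upper'"
proof
  assume eq: "tagged_arr g upper = tagged_arr g' upper'"
  show "g = g' \<and> upper = upper'"
    using arg_cong[OF eq, of untag_arr] arg_cong[OF eq, of is_upper] by simp
qed simp

text \<open>An arrow of the lower copy lands in the upper copy as soon as its codomain lies in I.\<close>

definition doubled_outside ::
  "('bo, 'bm) cat \<Rightarrow> 'bo set \<Rightarrow> (('bo, 'bm) test_univ, ('bo, 'bm) test_univ) cat" where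
  "doubled_outside B I =
     \<lparr>Obj = {tagged_obj b upper | b upper. b \<in> Obj B \<and> (upper \<or> b \<notin> I)},
      Arr = {tagged_arr g upper | g upper. g \<in> Arr B \<and> (upper \<or> Dom B g \<notin> I)},
      Dom = (\<lambda>m. tagged_obj (Dom B (untag_arr m)) (is_upper m)),
      Cod = (\<lambda>m. tagged_obj (Cod B (untag_arr m)) (is_upper m \<or> Cod B (untag_arr m) \<in> I)),
      Idt = (\<lambda>s. tagged_arr (Idt B (untag_obj s)) (is_upper s)),
      Comp = (\<lambda>m' m. tagged_arr (Comp B (untag_arr m') (untag_arr m)) (is_upper m))\<rparr>"

lemma doubled_outside_ObjE:
  assumes "s \<in> Obj (doubled_outside B I)"
  obtains b upper where "s = tagged_obj b upper" "b \<in> Obj B" "upper \<or> b \<notin> I"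
  using assms unfolding doubled_outside_def by auto

lemma doubled_outside_ArrE:
  assumes "m \<in> Arr (doubled_outside B I)"
  obtains g upper where "m = tagged_arr g upper" "g \<in> Arr B" "upper \<or> Dom B g \<notin> I"
  using assms unfolding doubled_outside_def by auto

lemma doubled_outside_simps [simp]:
  "tagged_obj b upper \<in> Obj (doubled_outside B I) \<longleftrightarrow> b \<in> Obj B \<and> (upper \<or> b \<notin> I)"
  "tagged_arr g upper \<in> Arr (doubled_outside B I) \<longleftrightarrow> g \<in> Arr B \<and> (upper \<or> Dom B g \<notin> I)"
  "Dom (doubled_outside B I) (tagged_arr g upper) = tagged_obj (Dom B g) upper"
  "Cod (doubled_outside B I) (tagged_arr g upper) = tagged_obj (Cod B g) (upper \<or> Cod B g \<in> I)"
  "Idt (doubled_outside B I) (tagged_obj b upper) = tagged_arr (Idt B b) upper"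
  "Comp (doubled_outside B I) (tagged_arr g' upper') (tagged_arr g upper) =
     tagged_arr (Comp B g' g) upper"
  unfolding doubled_outside_def by auto

lemma is_cat_doubled_outside:
  assumes B: "is_cat B" and I: "is_cosieve B I"
  shows "is_cat (doubled_outside B I)" (is "is_cat ?C")
  unfolding is_cat_def
proof (intro conjI ballI impI)
  fix m assume "m \<in> Arr ?C"
  then obtain g upper where m: "m = tagged_arr g upper" "g \<in> Arr B" "upper \<or> Dom B g \<notin> I"
    by (rule doubled_outside_ArrE)
  then show "Dom ?C m \<in> Obj ?C" "Cod ?C m \<in> Obj ?C"
    "Comp ?C m (Idt ?C (Dom ?C m)) = m" "Comp ?C (Idt ?C (Cod ?C m)) m = m"
    by (simp_all add: is_catD[OF B])
next
  fix s assume "s \<in> Obj ?C"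
  then obtain b upper where "s = tagged_obj b upper" "b \<in> Obj B" "upper \<or> b \<notin> I"
    by (rule doubled_outside_ObjE)
  then show "Idt ?C s \<in> Arr ?C" "Dom ?C (Idt ?C s) = s" "Cod ?C (Idt ?C s) = s"
    by (auto simp add: is_catD[OF B])
next
  fix m m' assume "m \<in> Arr ?C" "m' \<in> Arr ?C" and mm': "Cod ?C m = Dom ?C m'"
  obtain g upper where m: "m = tagged_arr g upper" "g \<in> Arr B" "upper \<or> Dom B g \<notin> I"
    using \<open>m \<in> Arr ?C\<close> by (rule doubled_outside_ArrE)
  obtain g' upper' where m': "m' = tagged_arr g' upper'" "g' \<in> Arr B"
    using \<open>m' \<in> Arr ?C\<close> by (rule doubled_outside_ArrE)
  have gg': "Cod B g = Dom B g'" "upper' \<longleftrightarrow> upper \<or> Dom B g' \<in> I"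
    using mm' m m' by auto
  have "Dom B g' \<in> I \<Longrightarrow> Cod B g' \<in> I"
    using I m'(2) unfolding is_cosieve_def by blast
  with m m' gg' show "Comp ?C m' m \<in> Arr ?C" "Dom ?C (Comp ?C m' m) = Dom ?C m"
    "Cod ?C (Comp ?C m' m) = Cod ?C m'"
    by (auto simp add: is_catD[OF B])
next
  fix m m' m'' assume "m \<in> Arr ?C" "m' \<in> Arr ?C" "m'' \<in> Arr ?C"
    and "Cod ?C m = Dom ?C m'" "Cod ?C m' = Dom ?C m''"
  then show "Comp ?C m'' (Comp ?C m' m) = Comp ?C (Comp ?C m'' m') m"
    by (auto elim!: doubled_outside_ArrE simp add: cat_Comp_assoc[OF B])
qed

definition upper_lens :: "('bo, 'bm) cat \<Rightarrow> ('bo, 'bm, ('bo, 'bm) test_univ, ('bo, 'bm) test_univ) lens" where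
  "upper_lens B = \<lparr>Get = \<lparr>FO = (\<lambda>b. tagged_obj b True), FM = (\<lambda>g. tagged_arr g True)\<rparr>,
                    Put = (\<lambda>b m. untag_arr m)\<rparr>"

definition split_lens ::
  "('bo, 'bm) cat \<Rightarrow> 'bo set \<Rightarrow> ('bo, 'bm, ('bo, 'bm) test_univ, ('bo, 'bm) test_univ) lens" where
  "split_lens B I = \<lparr>Get = \<lparr>FO = (\<lambda>b. tagged_obj b (b \<in> I)), FM = (\<lambda>g. tagged_arr g (Dom B g \<in> I))\<rparr>,
                      Put = (\<lambda>b m. untag_arr m)\<rparr>"

lemma is_lens_upper_lens:
  assumes B: "is_cat B"
  shows "is_lens B (doubled_outside B I) (upper_lens B)"
  unfolding is_lens_def is_functor_def upper_lens_def
  by (auto elim!: doubled_outside_ArrE simp add: is_catD[OF B])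

lemma is_lens_split_lens:
  assumes B: "is_cat B" and I: "is_cosieve B I"
  shows "is_lens B (doubled_outside B I) (split_lens B I)"
  using I unfolding is_lens_def is_functor_def split_lens_def is_cosieve_def
  by (auto elim!: doubled_outside_ArrE simp add: is_catD[OF B])

lemma lens_epi_surj_Obj:
  assumes A: "is_cat A" and B: "is_cat B" and E: "lens_epi A B E"
  shows "Obj B \<subseteq> FO (Get E) ` Obj A"
proof -
  define I where "I = FO (Get E) ` Obj A"
  have L: "is_lens A B E"
    using E unfolding lens_epi_def by blast
  have I: "is_cosieve B I"
    unfolding I_def using A L by (rule lens_image_is_cosieve)
  have "Dom B (FM (Get E) f) \<in> I" if "f \<in> Arr A" for f
    using that cat_Dom_in_Obj[OF A] unfolding I_def
    by (simp add: functor_Dom_FM[OF lens_is_functor[OF L]])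
  then have "lens_eq A (doubled_outside B I) (lens_comp (upper_lens B) E) (lens_comp (split_lens B I) E)"
    unfolding lens_eq_def functor_eq_def lens_comp_def functor_comp_def upper_lens_def
      split_lens_def I_def
    by simp
  then have "lens_eq B (doubled_outside B I) (upper_lens B) (split_lens B I)"
    using E is_cat_doubled_outside[OF B I] is_lens_upper_lens[OF B] is_lens_split_lens[OF B I]
    unfolding lens_epi_def by blast
  then show ?thesis
    unfolding lens_eq_def functor_eq_def upper_lens_def split_lens_def I_def by auto
qed

lemma lens_lifts_composable_pairs:
  assumes A: "is_cat A" and B: "is_cat B" and L: "is_lens A B E"
    and surj: "Obj B \<subseteq> FO (Get E) ` Obj A"
  shows "lifts_composable_pairs A B (Get E)"
  unfolding lifts_composable_pairs_def
proof (intro ballI impI)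
  fix g g' assume g: "g \<in> Arr B" and g': "g' \<in> Arr B" and gg': "Cod B g = Dom B g'"
  obtain x where x: "x \<in> Obj A" "Dom B g = FO (Get E) x"
    using surj cat_Dom_in_Obj[OF B g] by blast
  define f where "f = Put E x g"
  have f: "f \<in> Arr A" "FM (Get E) f = g"
    unfolding f_def using x g by (simp_all add: lens_Put_in_Arr[OF L] lens_Get_Put[OF L])
  have y: "Cod A f \<in> Obj A" "Dom B g' = FO (Get E) (Cod A f)"
    using f gg' cat_Cod_in_Obj[OF A] functor_Cod_FM[OF lens_is_functor[OF L]] by auto
  define f' where "f' = Put E (Cod A f) g'"
  have f': "f' \<in> Arr A" "Dom A f' = Cod A f" "FM (Get E) f' = g'"
    unfolding f'_def using y g'
    by (simp_all add: lens_Put_in_Arr[OF L] lens_Dom_Put[OF L] lens_Get_Put[OF L])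
  show "\<exists>f\<in>Arr A. \<exists>f'\<in>Arr A. Cod A f = Dom A f' \<and> FM (Get E) f = g \<and> FM (Get E) f' = g'"
    using f f'(1,3) f'(2)[symmetric] by blast
qed

theorem proposition6p2:
  fixes A :: "('ao, 'am) cat" and B :: "('bo, 'bm) cat"
    and E :: "('ao, 'am, 'bo, 'bm) lens"
  assumes "is_cat A" and "is_cat B" and "lens_epi A B E"
  shows "\<forall>D :: ('do, 'dm) cat.
           is_coequaliser (kernel_pair A (Get E)) A B kp_proj1 kp_proj2 (Get E) D"
proof
  fix D :: "('do, 'dm) cat"
  have L: "is_lens A B E"
    using assms(3) unfolding lens_epi_def by blast
  have "Obj B \<subseteq> FO (Get E) ` Obj A"
    using assms by (rule lens_epi_surj_Obj)
  then have "lifts_composable_pairs A B (Get E)"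
    using assms(1,2) L by (intro lens_lifts_composable_pairs)
  then show "is_coequaliser (kernel_pair A (Get E)) A B kp_proj1 kp_proj2 (Get E) D"
    using assms(1,2) lens_is_functor[OF L] by (intro coequaliser_kernel_pairI)
qed

end
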